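(* Let $X$ be a locally compact, Hausdorff, second countable space and $(Y,d)$ a complete metric space. A net $(f_\lambda)$ in $C_{od}(X,Y)$ is $\gamma$-Cauchy if and only if $(f_\lambda)$ converges in $\tau_{\iota,D}$ to some $f\in C_{od}(X,Y)$.
   Context: $C_{od}(X,Y)$ is the set of continuous functions $f:\mathrm{dom}(f)\to Y$ whose domain is an open subset of $X$ (including the empty function). $CL(X)$ is the set of closed subsets of $X$ (including $\emptyset$) with the Fell topology, generated by $(X\setminus K)^+=\{A: A\subseteq X\setminus K\}$ ($K$ compact) and $V^-=\{A: A\cap V\neq\emptyset\}$ ($V$ nonempty open). Let $D(f)=X\setminus\mathrm{dom}(f)$. The topology $\tau_{\iota,D}$ on $C_{od}(X,Y)$ is generated by the sets $\langle K,V\rangle=\{f: K\subseteq\mathrm{dom}(f),\ f(K)\subseteq V\}$ ($K\subseteq X$ compact, $V\subseteq Y$ open) and $D^{-1}(W)$ ($W$ Fell-open). A net $(f_\lambda)$ in $C_{od}(X,Y)$ is called $\gamma$-Cauchy if $(D(f_\lambda))$ converges in the Fell topology to some $A\in CL(X)$ and, in case $A\neq X$, for every nonempty compact $K\subseteq X\setminus A$ there exists $\lambda_K$ such that $K\subseteq\mathrm{dom}(f_\lambda)$ for all $\lambda>\lambda_K$ and the net $(f_\lambda|_K)_{\lambda>\lambda_K}$ is uniformly Cauchy. *)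

theory Defs
  imports "HOL-Analysis.Analysis"
begin

text \<open>Partial functions are represented as maps \<open>'a \<rightharpoonup> 'b\<close>; the domain is \<open>dom f\<close>.
  \<open>C_od\<close> = continuous maps with open domain (the empty map included).\<close>

definition C_od :: "('a::topological_space \<rightharpoonup> 'b::topological_space) set" where
  "C_od = {f. open (dom f) \<and> continuous_on (dom f) (\<lambda>x. the (f x))}"

definition Dset :: "('a \<rightharpoonup> 'b) \<Rightarrow> 'a set" where
  "Dset f = - dom f"

text \<open>Fell topology on CL(X) (closed sets, including the empty set).\<close>
definition fell_topology :: "'a::topological_space set topology" where
  "fell_topology = topology_generated_by
     ({{A. closed A \<and> A \<subseteq> - K} | K. compact K} \<union>
      {{A. closed A \<and> A \<inter> V \<noteq> {}} | V. open V \<and> V \<noteq> {}})"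

definition sub_KV :: "'a set \<Rightarrow> 'b set \<Rightarrow> ('a \<rightharpoonup> 'b) set" where
  "sub_KV K V = {f. K \<subseteq> dom f \<and> (\<lambda>x. the (f x)) ` K \<subseteq> V}"

definition tau_iota_D :: "('a::topological_space \<rightharpoonup> 'b::topological_space) topology" where
  "tau_iota_D = topology_generated_by
     ({C_od \<inter> sub_KV K V | K V. compact K \<and> open V} \<union>
      {C_od \<inter> Dset -` W | W. openin fell_topology W})"

definition directed_set :: "('i \<Rightarrow> 'i \<Rightarrow> bool) \<Rightarrow> bool" where
  "directed_set le \<longleftrightarrow> (\<forall>x. le x x) \<and> (\<forall>x y z. le x y \<longrightarrow> le y z \<longrightarrow> le x z)
     \<and> (\<forall>x y. \<exists>z. le x z \<and> le y z)"

definition net_converges :: "('i \<Rightarrow> 'i \<Rightarrow> bool) \<Rightarrow> 'x topology \<Rightarrow> ('i \<Rightarrow> 'x) \<Rightarrow> 'x \<Rightarrow> bool" where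
  "net_converges le T x a \<longleftrightarrow> a \<in> topspace T \<and>
     (\<forall>U. openin T U \<and> a \<in> U \<longrightarrow> (\<exists>l0. \<forall>l. le l0 l \<longrightarrow> x l \<in> U))"

definition gamma_Cauchy :: "('i \<Rightarrow> 'i \<Rightarrow> bool) \<Rightarrow> ('i \<Rightarrow> ('a::topological_space \<rightharpoonup> 'b::metric_space)) \<Rightarrow> bool" where
  "gamma_Cauchy le f \<longleftrightarrow> (\<exists>A. closed A \<and> net_converges le fell_topology (\<lambda>l. Dset (f l)) A \<and>
     (A \<noteq> UNIV \<longrightarrow>
       (\<forall>K. compact K \<and> K \<noteq> {} \<and> K \<subseteq> - A \<longrightarrow>
          (\<exists>lK. (\<forall>l. le lK l \<longrightarrow> K \<subseteq> dom (f l)) \<and>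
               (\<forall>e>0. \<exists>l1. le lK l1 \<and> (\<forall>l m. le l1 l \<longrightarrow> le l1 m \<longrightarrow>
                   (\<forall>x\<in>K. dist (the (f l x)) (the (f m x)) < e)))))))"

end

theory Submission
  imports Defs
begin

text \<open>Nets are treated as filters of tails. Convergence in \<open>\<tau>_{\<iota>,D}\<close> is equivalent to
  Fell convergence of the complements of the domains together with uniform convergence on the
  compact subsets of the domain of the limit: one direction because a uniform limit stays inside
  an open neighbourhood of the compact image \<open>g(K)\<close>, the other by covering \<open>K\<close> with finitely
  many compact neighbourhoods on which \<open>g\<close> oscillates little, which needs local compactness.
  A \<open>\<gamma>\<close>-Cauchy net therefore converges pointwise on \<open>X - A\<close> by completeness of \<open>Y\<close>, uniformly
  on compacta, and the limit is continuous by local compactness.\<close>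

definition net_filter :: "('i \<Rightarrow> 'i \<Rightarrow> bool) \<Rightarrow> 'i filter" where
  "net_filter le = (INF l0. principal {l. le l0 l})"

lemma eventually_net_filter:
  assumes "directed_set le"
  shows "eventually P (net_filter le) \<longleftrightarrow> (\<exists>l0. \<forall>l. le l0 l \<longrightarrow> P l)"
proof -
  have directed: "\<And>x y. \<exists>z. le x z \<and> le y z" and transitive: "\<And>x y z. le x y \<Longrightarrow> le y z \<Longrightarrow> le x z"
    using assms unfolding directed_set_def by blast+
  have "eventually P (net_filter le) \<longleftrightarrow> (\<exists>b\<in>UNIV. eventually P (principal {l. le b l}))"
    unfolding net_filter_def
  proof (rule eventually_INF_base)
    fix a b
    obtain z where "le a z" "le b z" using directed by blast
    then have "{l. le z l} \<subseteq> {l. le a l} \<inter> {l. le b l}" using transitive by blast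
    then show "\<exists>z\<in>UNIV. principal {l. le z l} \<le> inf (principal {l. le a l}) (principal {l. le b l})"
      by (auto simp: inf_principal)
  qed simp
  then show ?thesis by (auto simp: eventually_principal)
qed

lemma net_filter_neq_bot:
  assumes "directed_set le"
  shows "net_filter le \<noteq> bot"
proof
  assume "net_filter le = bot"
  then obtain l0 where "\<And>l. le l0 l \<Longrightarrow> False"
    unfolding trivial_limit_def eventually_net_filter[OF assms] by blast
  moreover have "le l0 l0" using assms unfolding directed_set_def by blast
  ultimately show False .
qed

lemma net_converges_iff_eventually:
  assumes "directed_set le"
  shows "net_converges le T x a \<longleftrightarrow> a \<in> topspace T \<and>
     (\<forall>U. openin T U \<and> a \<in> U \<longrightarrow> eventually (\<lambda>l. x l \<in> U) (net_filter le))"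
  unfolding net_converges_def eventually_net_filter[OF assms] by simp

lemma net_converges_topology_generated_by_iff:
  assumes "directed_set le"
  shows "net_converges le (topology_generated_by B) x a \<longleftrightarrow>
    a \<in> \<Union>B \<and> (\<forall>S\<in>B. a \<in> S \<longrightarrow> eventually (\<lambda>l. x l \<in> S) (net_filter le))"
proof -
  have "eventually (\<lambda>l. x l \<in> U) (net_filter le)"
    if "generate_topology_on B U" "a \<in> U" "\<forall>S\<in>B. a \<in> S \<longrightarrow> eventually (\<lambda>l. x l \<in> S) (net_filter le)"
    for U
    using that
  proof (induction rule: generate_topology_on.induct)
    case (UN K)
    then obtain k where "k \<in> K" "a \<in> k" by blast
    with UN.IH UN.prems(2) have "eventually (\<lambda>l. x l \<in> k) (net_filter le)" by blast
    then show ?case by (rule eventually_mono) (use \<open>k \<in> K\<close> in blast)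
  qed (auto intro: eventually_conj)
  then show ?thesis
    unfolding net_converges_iff_eventually[OF assms]
    by (auto simp: openin_topology_generated_by_iff generate_topology_on.Basis)
qed

lemma topspace_fell_topology: "topspace fell_topology = {A. closed A}"
proof -
  have "closed A \<Longrightarrow> A \<in> {A. closed A \<and> A \<subseteq> - {}}" for A :: "'a set" by simp
  then show ?thesis
    unfolding fell_topology_def topology_generated_by_topspace
    by (auto simp del: Compl_empty_eq)
qed

lemma closed_Dset: "g \<in> C_od \<Longrightarrow> closed (Dset g)"
  unfolding C_od_def Dset_def by (auto simp: closed_def)

lemma locally_compact_compact_neighbourhood:
  fixes W :: "'a::t2_space set"
  assumes "locally_compact_space (euclidean :: 'a topology)" "open W" "x \<in> W"
  obtains U V where "open U" "compact V" "x \<in> U" "U \<subseteq> V" "V \<subseteq> W"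
proof -
  have "Hausdorff_space (euclidean :: 'a topology)"
    unfolding Hausdorff_space_def disjnt_def using hausdorff by auto
  then have "neighbourhood_base_of (compactin euclidean) (euclidean :: 'a topology)"
    using assms(1) locally_compact_space_neighbourhood_base by blast
  then have "\<exists>U V. open U \<and> compact V \<and> x \<in> U \<and> U \<subseteq> V \<and> V \<subseteq> W"
    using assms(2,3) unfolding neighbourhood_base_of by simp
  then show ?thesis using that by blast
qed

definition uniformly_Cauchy_filter :: "'a set \<Rightarrow> ('i \<Rightarrow> 'a \<Rightarrow> 'b::metric_space) \<Rightarrow> 'i filter \<Rightarrow> bool" where
  "uniformly_Cauchy_filter K h F \<longleftrightarrow> (\<forall>e>0. \<exists>P. eventually P F \<and>
     (\<forall>l m. P l \<and> P m \<longrightarrow> (\<forall>x\<in>K. dist (h l x) (h m x) < e)))"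

lemma uniform_limit_Lim_if_uniformly_Cauchy_filter:
  fixes h :: "'i \<Rightarrow> 'a \<Rightarrow> 'b::complete_space"
  assumes "F \<noteq> bot" "uniformly_Cauchy_filter K h F"
  shows "uniform_limit K h (\<lambda>x. Lim F (\<lambda>l. h l x)) F"
proof -
  define L where "L x = Lim F (\<lambda>l. h l x)" for x
  have L: "((\<lambda>l. h l x) \<longlongrightarrow> L x) F" if "x \<in> K" for x
  proof -
    have "cauchy_filter (filtermap (\<lambda>l. h l x) F)"
      using assms(2) that unfolding cauchy_filter_metric_filtermap uniformly_Cauchy_filter_def by blast
    then have "\<exists>c. filtermap (\<lambda>l. h l x) F \<le> nhds c"
      using assms(1) by (intro cauchy_filter_complete_converges[OF _ complete_UNIV])
        (auto simp: filtermap_bot_iff)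
    then obtain c where "((\<lambda>l. h l x) \<longlongrightarrow> c) F" by (auto simp: filterlim_def)
    then show ?thesis unfolding L_def using assms(1) by (simp add: tendsto_Lim)
  qed
  show ?thesis unfolding L_def[symmetric] uniform_limit_iff
  proof (intro allI impI)
    fix e :: real assume "e > 0"
    then obtain P where P: "eventually P F"
      and close: "\<And>l m x. P l \<Longrightarrow> P m \<Longrightarrow> x \<in> K \<Longrightarrow> dist (h l x) (h m x) < e/2"
      using assms(2) unfolding uniformly_Cauchy_filter_def by (meson half_gt_zero)
    have bound: "dist (h l x) (L x) \<le> e/2" if "P l" "x \<in> K" for l x
    proof (rule tendsto_upperbound[OF _ _ assms(1)])
      show "((\<lambda>m. dist (h l x) (h m x)) \<longlongrightarrow> dist (h l x) (L x)) F"
        using L[OF that(2)] by (intro tendsto_intros)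
      show "eventually (\<lambda>m. dist (h l x) (h m x) \<le> e/2) F"
        using P by (rule eventually_mono) (use close that in \<open>blast intro: less_imp_le\<close>)
    qed
    show "eventually (\<lambda>l. \<forall>x\<in>K. dist (h l x) (L x) < e) F"
      using P by (rule eventually_mono) (use bound \<open>e > 0\<close> in fastforce)
  qed
qed

lemma uniformly_Cauchy_filter_if_uniform_limit:
  assumes "uniform_limit K h G F"
  shows "uniformly_Cauchy_filter K h F"
  unfolding uniformly_Cauchy_filter_def
proof (intro allI impI)
  fix e :: real assume "e > 0"
  then have "eventually (\<lambda>l. \<forall>x\<in>K. dist (h l x) (G x) < e/2) F"
    by (intro uniform_limitD[OF assms]) simp
  then show "\<exists>P. eventually P F \<and> (\<forall>l m. P l \<and> P m \<longrightarrow> (\<forall>x\<in>K. dist (h l x) (h m x) < e))"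
    by (blast intro: dist_triangle_half_l)
qed

lemma continuous_on_if_uniform_limit_on_compacta:
  fixes L :: "'a::t2_space \<Rightarrow> 'b::metric_space"
  assumes "locally_compact_space (euclidean :: 'a topology)" "open S" "F \<noteq> bot"
    and "\<And>K. compact K \<Longrightarrow> K \<subseteq> S \<Longrightarrow>
      eventually (\<lambda>l. continuous_on K (h l)) F \<and> uniform_limit K h L F"
  shows "continuous_on S L"
  unfolding continuous_on_eq_continuous_at[OF assms(2)]
proof
  fix x assume "x \<in> S"
  then obtain U V where UV: "open U" "compact V" "x \<in> U" "U \<subseteq> V" "V \<subseteq> S"
    using locally_compact_compact_neighbourhood[OF assms(1,2)] by blast
  from assms(4)[OF UV(2,5)] have "continuous_on V L"
    using uniform_limit_theorem assms(3) by blast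
  then show "isCont L x"
    using UV(1,3,4) continuous_on_subset continuous_on_eq_continuous_at by blast
qed

lemma eventually_sub_KV_if_uniform_limit:
  fixes f :: "'i \<Rightarrow> ('a::topological_space \<rightharpoonup> 'b::metric_space)"
  assumes "compact K" "open V" "continuous_on K G" "G ` K \<subseteq> V"
    and "eventually (\<lambda>l. K \<subseteq> dom (f l)) F" "uniform_limit K (\<lambda>l x. the (f l x)) G F"
  shows "eventually (\<lambda>l. f l \<in> sub_KV K V) F"
proof -
  have "compact (G ` K)" by (rule compact_continuous_image[OF assms(3,1)])
  then obtain e where e: "e > 0" "\<And>y. y \<in> G ` K \<Longrightarrow> ball y e \<subseteq> V"
    using Heine_Borel_lemma[of "G ` K" "{V}"] assms(2,4) by auto
  have "eventually (\<lambda>l. \<forall>x\<in>K. dist (the (f l x)) (G x) < e) F"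
    using assms(6) e(1) by (rule uniform_limitD)
  with assms(5) show ?thesis
    by eventually_elim (use e(2) in \<open>fastforce simp: sub_KV_def dist_commute\<close>)
qed

lemma eventually_uniformly_close_if_eventually_sub_KV:
  fixes g :: "'a::t2_space \<rightharpoonup> 'b::metric_space"
  assumes "locally_compact_space (euclidean :: 'a topology)"
    and "g \<in> C_od" "compact K" "K \<subseteq> dom g" "e > 0"
    and sub_KV: "\<And>K V. compact K \<Longrightarrow> open V \<Longrightarrow> g \<in> sub_KV K V \<Longrightarrow>
      eventually (\<lambda>l. f l \<in> sub_KV K V) F"
  shows "eventually (\<lambda>l. K \<subseteq> dom (f l) \<and> (\<forall>x\<in>K. dist (the (f l x)) (the (g x)) < e)) F"
proof -
  define G where "G = (\<lambda>x. the (g x))"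
  have nbhd: "open (dom g \<inter> G -` ball (G x) (e/2))" for x
    using assms(2) by (intro continuous_open_preimage) (auto simp: C_od_def G_def)
  have "\<exists>U V. open U \<and> compact V \<and> x \<in> U \<and> U \<subseteq> V \<and> V \<subseteq> dom g \<inter> G -` ball (G x) (e/2)"
    if "x \<in> K" for x
  proof -
    have "x \<in> dom g \<inter> G -` ball (G x) (e/2)" using that assms(4,5) by auto
    with locally_compact_compact_neighbourhood[OF assms(1) nbhd] show ?thesis by metis
  qed
  then have "\<forall>x\<in>K. \<exists>U V. open U \<and> compact V \<and> x \<in> U \<and> U \<subseteq> V
      \<and> V \<subseteq> dom g \<inter> G -` ball (G x) (e/2)" by blast
  then obtain U V where UV: "\<And>x. x \<in> K \<Longrightarrow> open (U x) \<and> compact (V x) \<and> x \<in> U x \<and> U x \<subseteq> V x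
      \<and> V x \<subseteq> dom g \<inter> G -` ball (G x) (e/2)"
    by metis
  obtain C where C: "C \<subseteq> K" "finite C" "K \<subseteq> (\<Union>c\<in>C. U c)"
    using compactE_image[OF assms(3), of K U] UV by blast
  have "\<forall>c\<in>C. eventually (\<lambda>l. f l \<in> sub_KV (V c) (ball (G c) (e/2))) F"
    using C(1) UV by (intro ballI sub_KV) (auto simp: sub_KV_def G_def)
  with C(2) have "eventually (\<lambda>l. \<forall>c\<in>C. f l \<in> sub_KV (V c) (ball (G c) (e/2))) F"
    by (rule eventually_ball_finite)
  then show ?thesis
  proof (rule eventually_mono)
    fix l assume l: "\<forall>c\<in>C. f l \<in> sub_KV (V c) (ball (G c) (e/2))"
    have "x \<in> dom (f l) \<and> dist (the (f l x)) (G x) < e" if x: "x \<in> K" for x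
    proof -
      obtain c where c: "c \<in> C" "x \<in> U c" using C(3) x by blast
      from c(1) C(1) have "c \<in> K" by blast
      with UV c(2) have "x \<in> V c" "G x \<in> ball (G c) (e/2)" by blast+
      moreover from l c(1) \<open>x \<in> V c\<close> have "x \<in> dom (f l)" "the (f l x) \<in> ball (G c) (e/2)"
        unfolding sub_KV_def by blast+
      ultimately show ?thesis unfolding mem_ball by (blast intro: dist_triangle_half_r)
    qed
    then show "K \<subseteq> dom (f l) \<and> (\<forall>x\<in>K. dist (the (f l x)) (the (g x)) < e)"
      unfolding G_def by auto
  qed
qed

lemma uniform_limit_if_eventually_sub_KV:
  fixes g :: "'a::t2_space \<rightharpoonup> 'b::metric_space"
  assumes "locally_compact_space (euclidean :: 'a topology)"
    and "g \<in> C_od" "compact K" "K \<subseteq> dom g"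
    and "\<And>K V. compact K \<Longrightarrow> open V \<Longrightarrow> g \<in> sub_KV K V \<Longrightarrow>
      eventually (\<lambda>l. f l \<in> sub_KV K V) F"
  shows "eventually (\<lambda>l. K \<subseteq> dom (f l)) F"
    and "uniform_limit K (\<lambda>l x. the (f l x)) (\<lambda>x. the (g x)) F"
proof -
  have close: "eventually (\<lambda>l. K \<subseteq> dom (f l) \<and> (\<forall>x\<in>K. dist (the (f l x)) (the (g x)) < e)) F"
    if "e > 0" for e
    using assms(1-4) that assms(5) by (rule eventually_uniformly_close_if_eventually_sub_KV)
  show "eventually (\<lambda>l. K \<subseteq> dom (f l)) F"
    using close[OF zero_less_one] by (rule eventually_mono) simp
  show "uniform_limit K (\<lambda>l x. the (f l x)) (\<lambda>x. the (g x)) F"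
    by (rule uniform_limitI, rule eventually_mono[OF close]) auto
qed

lemma net_converges_tau_iota_D_iff:
  fixes f :: "'i \<Rightarrow> ('a::t2_space \<rightharpoonup> 'b::metric_space)"
  assumes "locally_compact_space (euclidean :: 'a topology)" "directed_set le"
    and "\<And>l. f l \<in> C_od" "g \<in> C_od"
  shows "net_converges le tau_iota_D f g \<longleftrightarrow>
    net_converges le fell_topology (\<lambda>l. Dset (f l)) (Dset g) \<and>
    (\<forall>K. compact K \<and> K \<subseteq> dom g \<longrightarrow> eventually (\<lambda>l. K \<subseteq> dom (f l)) (net_filter le) \<and>
       uniform_limit K (\<lambda>l x. the (f l x)) (\<lambda>x. the (g x)) (net_filter le))"
proof -
  let ?F = "net_filter le"
  let ?S_KV = "{C_od \<inter> sub_KV K V | K V. compact K \<and> open V}"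
  let ?S_D = "{C_od \<inter> Dset -` W | W. openin fell_topology W}"
  have "g \<in> C_od \<inter> Dset -` topspace fell_topology"
    using assms(4) closed_Dset by (auto simp: topspace_fell_topology)
  moreover have "C_od \<inter> Dset -` topspace fell_topology \<in> ?S_D"
    using openin_topspace by blast
  ultimately have "g \<in> \<Union>(?S_KV \<union> ?S_D)" by blast
  then have "net_converges le tau_iota_D f g \<longleftrightarrow>
      (\<forall>S\<in>?S_KV. g \<in> S \<longrightarrow> eventually (\<lambda>l. f l \<in> S) ?F) \<and>
      (\<forall>S\<in>?S_D. g \<in> S \<longrightarrow> eventually (\<lambda>l. f l \<in> S) ?F)"
    unfolding tau_iota_D_def net_converges_topology_generated_by_iff[OF assms(2)] ball_Un by simp
  also have "(\<forall>S\<in>?S_KV. g \<in> S \<longrightarrow> eventually (\<lambda>l. f l \<in> S) ?F) \<longleftrightarrow>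
      (\<forall>K V. compact K \<longrightarrow> open V \<longrightarrow> g \<in> sub_KV K V \<longrightarrow> eventually (\<lambda>l. f l \<in> sub_KV K V) ?F)"
    using assms(3,4) by (simp add: Ball_def imp_ex) fast
  also have "(\<forall>S\<in>?S_D. g \<in> S \<longrightarrow> eventually (\<lambda>l. f l \<in> S) ?F) \<longleftrightarrow>
      (\<forall>W. openin fell_topology W \<longrightarrow> Dset g \<in> W \<longrightarrow> eventually (\<lambda>l. Dset (f l) \<in> W) ?F)"
    using assms(3,4) by (simp add: Ball_def imp_ex)
  finally have tau: "net_converges le tau_iota_D f g \<longleftrightarrow>
      (\<forall>K V. compact K \<longrightarrow> open V \<longrightarrow> g \<in> sub_KV K V \<longrightarrow> eventually (\<lambda>l. f l \<in> sub_KV K V) ?F) \<and>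
      (\<forall>W. openin fell_topology W \<longrightarrow> Dset g \<in> W \<longrightarrow> eventually (\<lambda>l. Dset (f l) \<in> W) ?F)" .
  have fell: "net_converges le fell_topology (\<lambda>l. Dset (f l)) (Dset g) \<longleftrightarrow>
      (\<forall>W. openin fell_topology W \<longrightarrow> Dset g \<in> W \<longrightarrow> eventually (\<lambda>l. Dset (f l) \<in> W) ?F)"
    unfolding net_converges_iff_eventually[OF assms(2)] topspace_fell_topology
    using closed_Dset[OF assms(4)] by blast
  have compacta: "(\<forall>K V. compact K \<longrightarrow> open V \<longrightarrow> g \<in> sub_KV K V \<longrightarrow> eventually (\<lambda>l. f l \<in> sub_KV K V) ?F)
      \<longleftrightarrow> (\<forall>K. compact K \<and> K \<subseteq> dom g \<longrightarrow> eventually (\<lambda>l. K \<subseteq> dom (f l)) ?F \<and>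
         uniform_limit K (\<lambda>l x. the (f l x)) (\<lambda>x. the (g x)) ?F)" (is "?KV \<longleftrightarrow> ?UL")
  proof
    assume ?KV
    then have "\<And>K V. compact K \<Longrightarrow> open V \<Longrightarrow> g \<in> sub_KV K V \<Longrightarrow>
        eventually (\<lambda>l. f l \<in> sub_KV K V) ?F"
      by blast
    with uniform_limit_if_eventually_sub_KV[OF assms(1,4)] show ?UL by blast
  next
    assume ul: ?UL
    show ?KV
    proof (intro allI impI)
      fix K V assume K: "compact K" and V: "open V" and "g \<in> sub_KV K V"
      then have "K \<subseteq> dom g" and img: "(\<lambda>x. the (g x)) ` K \<subseteq> V" by (auto simp: sub_KV_def)
      have cont: "continuous_on K (\<lambda>x. the (g x))"
        using assms(4) \<open>K \<subseteq> dom g\<close> by (auto simp: C_od_def intro: continuous_on_subset)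
      from ul K \<open>K \<subseteq> dom g\<close> have "eventually (\<lambda>l. K \<subseteq> dom (f l)) ?F"
        and "uniform_limit K (\<lambda>l x. the (f l x)) (\<lambda>x. the (g x)) ?F"
        by blast+
      then show "eventually (\<lambda>l. f l \<in> sub_KV K V) ?F"
        by (rule eventually_sub_KV_if_uniform_limit[OF K V cont img])
    qed
  qed
  show ?thesis unfolding tau fell compacta by (rule conj_commute)
qed

lemma net_tail_uniformly_Cauchy_iff:
  assumes "directed_set le"
  shows "(\<exists>lK. (\<forall>l. le lK l \<longrightarrow> K \<subseteq> dom (f l)) \<and>
      (\<forall>e>0. \<exists>l1. le lK l1 \<and> (\<forall>l m. le l1 l \<longrightarrow> le l1 m \<longrightarrow>
         (\<forall>x\<in>K. dist (the (f l x)) (the (f m x)) < e)))) \<longleftrightarrow>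
    eventually (\<lambda>l. K \<subseteq> dom (f l)) (net_filter le) \<and>
    uniformly_Cauchy_filter K (\<lambda>l x. the (f l x)) (net_filter le)"
    (is "?tail \<longleftrightarrow> ?dom \<and> ?Cauchy")
proof
  let ?F = "net_filter le"
  assume ?tail
  then obtain lK where lK_dom: "\<forall>l. le lK l \<longrightarrow> K \<subseteq> dom (f l)"
    and Cauchy: "\<forall>e>0. \<exists>l1. le lK l1 \<and> (\<forall>l m. le l1 l \<longrightarrow> le l1 m \<longrightarrow>
      (\<forall>x\<in>K. dist (the (f l x)) (the (f m x)) < e))"
    by blast
  have ?dom using lK_dom unfolding eventually_net_filter[OF assms] by blast
  moreover have ?Cauchy
    unfolding uniformly_Cauchy_filter_def
  proof (intro allI impI)
    fix e :: real assume "e > 0"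
    then obtain l1 where "\<forall>l m. le l1 l \<longrightarrow> le l1 m \<longrightarrow> (\<forall>x\<in>K. dist (the (f l x)) (the (f m x)) < e)"
      using Cauchy by blast
    moreover have "eventually (le l1) ?F" unfolding eventually_net_filter[OF assms] by blast
    ultimately show "\<exists>P. eventually P ?F \<and>
        (\<forall>l m. P l \<and> P m \<longrightarrow> (\<forall>x\<in>K. dist (the (f l x)) (the (f m x)) < e))"
      by blast
  qed
  ultimately show "?dom \<and> ?Cauchy" ..
next
  let ?F = "net_filter le"
  have transitive: "\<And>x y z. le x y \<Longrightarrow> le y z \<Longrightarrow> le x z" and directed: "\<And>x y. \<exists>z. le x z \<and> le y z"
    using assms unfolding directed_set_def by blast+
  assume "?dom \<and> ?Cauchy"
  then obtain lK where lK_dom: "\<forall>l. le lK l \<longrightarrow> K \<subseteq> dom (f l)"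
    unfolding eventually_net_filter[OF assms] by blast
  have "\<exists>l1. le lK l1 \<and> (\<forall>l m. le l1 l \<longrightarrow> le l1 m \<longrightarrow>
      (\<forall>x\<in>K. dist (the (f l x)) (the (f m x)) < e))" if "e > 0" for e
  proof -
    obtain P where P: "eventually P ?F"
      and close: "\<forall>l m. P l \<and> P m \<longrightarrow> (\<forall>x\<in>K. dist (the (f l x)) (the (f m x)) < e)"
      using \<open>?dom \<and> ?Cauchy\<close> \<open>e > 0\<close> unfolding uniformly_Cauchy_filter_def by blast
    from P obtain l2 where l2: "\<forall>l. le l2 l \<longrightarrow> P l"
      unfolding eventually_net_filter[OF assms] by blast
    obtain z where "le lK z" "le l2 z" using directed by blast
    with close l2 transitive[OF \<open>le l2 z\<close>] show ?thesis by blast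
  qed
  with lK_dom show ?tail by blast
qed

lemma gamma_Cauchy_iff:
  assumes "directed_set le"
  shows "gamma_Cauchy le f \<longleftrightarrow> (\<exists>A. closed A \<and> net_converges le fell_topology (\<lambda>l. Dset (f l)) A \<and>
    (\<forall>K. compact K \<and> K \<subseteq> - A \<longrightarrow> eventually (\<lambda>l. K \<subseteq> dom (f l)) (net_filter le) \<and>
       uniformly_Cauchy_filter K (\<lambda>l x. the (f l x)) (net_filter le)))"
proof -
  define R where "R K \<longleftrightarrow> eventually (\<lambda>l. K \<subseteq> dom (f l)) (net_filter le) \<and>
    uniformly_Cauchy_filter K (\<lambda>l x. the (f l x)) (net_filter le)" for K
  have "R {}"
    by (auto simp: R_def uniformly_Cauchy_filter_def intro: exI[of _ "\<lambda>_. True"])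
  then have "(A \<noteq> UNIV \<longrightarrow> (\<forall>K. compact K \<and> K \<noteq> {} \<and> K \<subseteq> - A \<longrightarrow> R K)) \<longleftrightarrow>
      (\<forall>K. compact K \<and> K \<subseteq> - A \<longrightarrow> R K)" for A
    by (cases "A = UNIV") auto
  then show ?thesis
    unfolding gamma_Cauchy_def net_tail_uniformly_Cauchy_iff[OF assms] R_def[symmetric]
    by (simp only: R_def)
qed

lemma C_od_limit_if_uniformly_Cauchy_on_compacta:
  fixes f :: "'i \<Rightarrow> ('a::t2_space \<rightharpoonup> 'b::complete_space)"
  assumes "locally_compact_space (euclidean :: 'a topology)" "F \<noteq> bot" "closed A"
    and "\<And>l. f l \<in> C_od"
    and Cauchy: "\<And>K. compact K \<Longrightarrow> K \<subseteq> - A \<Longrightarrow> eventually (\<lambda>l. K \<subseteq> dom (f l)) F \<and>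
      uniformly_Cauchy_filter K (\<lambda>l x. the (f l x)) F"
  obtains g where "g \<in> C_od" "dom g = - A"
    "\<And>K. compact K \<Longrightarrow> K \<subseteq> - A \<Longrightarrow> uniform_limit K (\<lambda>l x. the (f l x)) (\<lambda>x. the (g x)) F"
proof -
  define L where "L x = Lim F (\<lambda>l. the (f l x))" for x
  define g where "g x = (if x \<in> A then None else Some (L x))" for x
  have dom_g: "dom g = - A" by (auto simp: g_def)
  have L: "uniform_limit K (\<lambda>l x. the (f l x)) L F" if "compact K" "K \<subseteq> - A" for K
    unfolding L_def using assms(2) Cauchy[OF that]
    by (blast intro: uniform_limit_Lim_if_uniformly_Cauchy_filter)
  have "continuous_on (- A) L"
  proof (rule continuous_on_if_uniform_limit_on_compacta[OF assms(1) _ assms(2)])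
    show "open (- A)" using assms(3) by auto
    fix K assume K: "compact K" "K \<subseteq> - A"
    have "continuous_on K (\<lambda>x. the (f l x))" if "K \<subseteq> dom (f l)" for l
      using assms(4)[of l] that by (auto simp: C_od_def intro: continuous_on_subset)
    then show "eventually (\<lambda>l. continuous_on K (\<lambda>x. the (f l x))) F \<and>
        uniform_limit K (\<lambda>l x. the (f l x)) L F"
      using Cauchy[OF K] L[OF K] by (auto elim: eventually_mono)
  qed
  then have "continuous_on (dom g) (\<lambda>x. the (g x))"
    unfolding dom_g by (rule continuous_on_eq) (simp add: g_def)
  then have "g \<in> C_od" using assms(3) by (simp add: C_od_def dom_g open_Compl)
  then show thesis
  proof (rule that[OF _ dom_g])
    fix K assume "compact K" "K \<subseteq> - A"
    with L show "uniform_limit K (\<lambda>l x. the (f l x)) (\<lambda>x. the (g x)) F"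
      by (subst uniform_limit_cong'[where i = L]) (auto simp: g_def)
  qed
qed

theorem mainTheorem8:
  fixes le :: "'i \<Rightarrow> 'i \<Rightarrow> bool"
    and f :: "'i \<Rightarrow> ('a::{t2_space, second_countable_topology} \<rightharpoonup> 'b::complete_space)"
  assumes "locally_compact_space (euclidean :: 'a topology)"
    and "directed_set le"
    and "\<And>l. f l \<in> C_od"
  shows "gamma_Cauchy le f \<longleftrightarrow> (\<exists>g \<in> C_od. net_converges le tau_iota_D f g)"
proof
  assume "gamma_Cauchy le f"
  then obtain A where A: "closed A" "net_converges le fell_topology (\<lambda>l. Dset (f l)) A"
    and Cauchy: "\<And>K. compact K \<Longrightarrow> K \<subseteq> - A \<Longrightarrow> eventually (\<lambda>l. K \<subseteq> dom (f l)) (net_filter le) \<and>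
      uniformly_Cauchy_filter K (\<lambda>l x. the (f l x)) (net_filter le)"
    unfolding gamma_Cauchy_iff[OF assms(2)] by blast
  obtain g where g: "g \<in> C_od" "dom g = - A"
    "\<And>K. compact K \<Longrightarrow> K \<subseteq> - A \<Longrightarrow> uniform_limit K (\<lambda>l x. the (f l x)) (\<lambda>x. the (g x)) (net_filter le)"
    using C_od_limit_if_uniformly_Cauchy_on_compacta[OF assms(1) net_filter_neq_bot[OF assms(2)]
        A(1) assms(3) Cauchy] by blast
  have "Dset g = A" using g(2) by (simp add: Dset_def)
  then have "net_converges le tau_iota_D f g"
    using net_converges_tau_iota_D_iff[OF assms(1-3) g(1)] A(2) g(2,3) Cauchy by auto
  with g(1) show "\<exists>g \<in> C_od. net_converges le tau_iota_D f g" by blast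
next
  assume "\<exists>g \<in> C_od. net_converges le tau_iota_D f g"
  then obtain g where "g \<in> C_od" "net_converges le tau_iota_D f g" by blast
  then show "gamma_Cauchy le f"
    unfolding gamma_Cauchy_iff[OF assms(2)] net_converges_tau_iota_D_iff[OF assms(1-3) \<open>g \<in> C_od\<close>]
    using closed_Dset[of g] by (intro exI[of _ "Dset g"])
      (auto simp: Dset_def intro: uniformly_Cauchy_filter_if_uniform_limit)
qed

end
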